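(* Consider the ASYMM algorithm described in the context, and let $t_1,t_2,\dots$ be the increasing subsequence of universal iterations at which a multiplier update (task T2) is performed, with $t_1$ the first such iteration. Then, for every $k=0,1,\dots$, between $t_{kN+1}$ and $t_{(k+1)N+1}$ every node performs task T1 at least once.
   Context: Problem: minimize $\sum_{i=1}^N f_i(x)$ over $x\in\mathbb{R}^n$ subject to $h_i(x)=0$ and $g_i(x)\le 0$ for $i=1,\dots,N$, with $f_i,h_i,g_i:\mathbb{R}^n\to\mathbb{R}$ private to node $i$. The nodes communicate over a fixed, undirected, connected graph $\mathcal{G}=(\mathcal{V},\mathcal{E})$, $\mathcal{V}=\{1,\dots,N\}$, with diameter $d_G$; $\mathcal{N}_i=\{j:(i,j)\in\mathcal{E}\}\cup\{i\}$ and $d_i=|\mathcal{N}_i|$. With multipliers $\nu_{ij}\in\mathbb{R}^n$, $\lambda_i,\mu_i\in\mathbb{R}$ and positive penalty parameters $\rho_{ij},\rho_{E_i},\rho_{I_i}$, the local Augmented Lagrangian of node $i$ is $\tilde{\mathcal{L}}_i=f_i(x_i)+\sum_{j\in\mathcal{N}_i\setminus\{i\}}[x_i^\top(\nu_{ij}-\nu_{ji})+\frac{\rho_{ij}+\rho_{ji}}{2}\|x_i-x_j\|^2]+\lambda_ih_i(x_i)+\frac{\rho_{E_i}}{2}\|h_i(x_i)\|^2+\frac{1}{2\rho_{I_i}}(\max\{0,\mu_i+\rho_{I_i}g_i(x_i)\}^2-\mu_i^2)$. Asynchronous model: each node alternates between IDLE mode (listening, possibly updating local variables) and AWAKE mode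 (computing and broadcasting), triggered by a local clock with waiting times $T_i\le\bar T_i$ for some constant $\bar T_i$; only one node can be awake at each time instant. Each awakening is an iteration $t\in\mathbb{N}$ of a universal discrete time, and $i_t$ is the node awake at iteration $t$. ASYMM: node $i$ stores $x_i$, copies $x_j$ of neighbors' variables, $\lambda_i,\mu_i,\nu_{ij}$ and received $\nu_{ji}$ ($j\in\mathcal{N}_i\setminus\{i\}$), penalties, a constant $L_i>0$, a tolerance $\epsilon_i$, a flag $M_{done}$ (initially $0$) and a matrix $S_i\in\{0,1\}^{d_G\times d_i}$ (initially zero) whose column $j|_i$ refers to neighbor $j$ and column $d_i$ to node $i$. When AWAKE: (T1) if $\prod_{l=1}^{d_i}S_i[d_G,l]\ne1$ and $M_{done}=0$: set $x_i\gets x_i-\frac1{L_i}\nabla_{x_i}\tilde{\mathcal{L}}_i$; if $\|\nabla_{x_i}\tilde{\mathcal{L}}_i\|\le\epsilon_i$ set $S_i[1,d_i]\gets1$; set $S_i[l,d_i]\gets\prod_{b=1}^{d_i}S_i[l-1,b]$ for $l=2,\dots,d_G$; broadcast $x_i$ and $S_i[:,d_i]$ to neighbors. (T2) Then, if $\prod_{l=1}^{d_i}S_i[d_G,l]=1$ and $M_{done}=0$: set $\nu_{ij}\gets\nu_{ij}+\rho_{ij}(x_i-x_j)$ for $j\in\mathcal{N}_i\setminus\{i\}$, $\lambda_i\gets\lambda_i+\rho_{E_i}h_i(x_i)$, $\mu_i\gets\max\{0,\mu_i+\rho_{I_i}g_i(x_i)\}$, update (non-decreasingly) $\rho_{E_i},\rho_{I_i},\rho_{ij}$,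 set $M_{done}\gets1$, broadcast $\nu_{ij},\rho_{ij}$ to each neighbor $j$. When IDLE: if $S_j[:,d_j]$ is received from a neighbor $j$ and no new $\nu_{ji}$ has already been received, set $S_i[l,j|_i]\gets S_j[l,d_j]$, $l=1,\dots,d_G$; if $\nu_{ji},\rho_{ji}$ are received from a neighbor $j$, set all entries of row $d_G$ of $S_i$ to $1$; if a new $x_j$ is received, update the local copy of $x_j$; if $M_{done}=1$ and new $\nu_{ji}$ has been received from all neighbors, set $M_{done}\gets0$, $S_i\gets0$ and update $\epsilon_i$. *)

theory Defs
  imports "HOL-Analysis.Analysis"
begin

text \<open>Nodes are the elements of a finite type 'v (so N = CARD('v)); the graph is given by
an edge relation E that is symmetric and irreflexive (undirected, no self loops).\<close>

definition undirected_graph :: "('v \<times> 'v) set \<Rightarrow> bool" where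
  "undirected_graph E \<longleftrightarrow> sym E \<and> irrefl E"

definition graph_connected :: "('v \<times> 'v) set \<Rightarrow> bool" where
  "graph_connected E \<longleftrightarrow> (\<forall>i j. (i, j) \<in> E\<^sup>*)"

definition nbrs :: "('v \<times> 'v) set \<Rightarrow> 'v \<Rightarrow> 'v set" where
  "nbrs E i = {j. (i, j) \<in> E}"

definition Nb :: "('v \<times> 'v) set \<Rightarrow> 'v \<Rightarrow> 'v set" where
  "Nb E i = insert i (nbrs E i)"

definition gdist :: "('v \<times> 'v) set \<Rightarrow> 'v \<Rightarrow> 'v \<Rightarrow> nat" where
  "gdist E i j = (LEAST k. (i, j) \<in> E ^^ k)"

definition diameter :: "('v::finite \<times> 'v) set \<Rightarrow> nat" where
  "diameter E = Max {gdist E i j | i j. True}"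

text \<open>The matrix S_i is represented as  S s i l c  (row l in 1..d_G, column indexed by the node
c in N_i; the column of node i itself is c = i); entries in {0,1} are represented by bool,
and a product of entries by a conjunction.
 nur s i j  is the copy at node i of nu_ji,  rhor s i j  the copy at i of rho_ji,
 xc s i j  the copy at i of x_j, and  nnu s i j  records that a new nu_ji has been received
(since the last reset of node i).\<close>

record ('v, 'a) astate =
  xv   :: "'v \<Rightarrow> 'a"
  xc   :: "'v \<Rightarrow> 'v \<Rightarrow> 'a"
  lam  :: "'v \<Rightarrow> real"
  mu   :: "'v \<Rightarrow> real"
  nu   :: "'v \<Rightarrow> 'v \<Rightarrow> 'a"
  nur  :: "'v \<Rightarrow> 'v \<Rightarrow> 'a"
  rE   :: "'v \<Rightarrow> real"
  rI   :: "'v \<Rightarrow> real"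
  rho  :: "'v \<Rightarrow> 'v \<Rightarrow> real"
  rhor :: "'v \<Rightarrow> 'v \<Rightarrow> real"
  eps  :: "'v \<Rightarrow> real"
  Md   :: "'v \<Rightarrow> bool"
  Sm   :: "'v \<Rightarrow> nat \<Rightarrow> 'v \<Rightarrow> bool"
  nnu  :: "'v \<Rightarrow> 'v \<Rightarrow> bool"

text \<open>Gradient of the local augmented Lagrangian of node i w.r.t. x_i, evaluated with the
local information of node i; gf, gh, gg are the gradients of f_i, h_i, g_i.\<close>
definition gradL ::
  "('v \<times> 'v) set \<Rightarrow> ('v \<Rightarrow> 'a \<Rightarrow> 'a) \<Rightarrow> ('v \<Rightarrow> 'a \<Rightarrow> 'a) \<Rightarrow> ('v \<Rightarrow> 'a \<Rightarrow> 'a)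
   \<Rightarrow> ('v \<Rightarrow> 'a::real_vector \<Rightarrow> real) \<Rightarrow> ('v \<Rightarrow> 'a \<Rightarrow> real) \<Rightarrow> ('v, 'a) astate \<Rightarrow> 'v \<Rightarrow> 'a" where
  "gradL E gf gh gg h g s i =
     gf i (xv s i)
     + (\<Sum>j\<in>nbrs E i. (nu s i j - nur s i j) + (rho s i j + rhor s i j) *\<^sub>R (xv s i - xc s i j))
     + (lam s i + rE s i * h i (xv s i)) *\<^sub>R gh i (xv s i)
     + max 0 (mu s i + rI s i * g i (xv s i)) *\<^sub>R gg i (xv s i)"

definition allrow :: "('v \<times> 'v) set \<Rightarrow> ('v, 'a) astate \<Rightarrow> 'v \<Rightarrow> nat \<Rightarrow> bool" where
  "allrow E s i l \<longleftrightarrow> (\<forall>c\<in>Nb E i. Sm s i l c)"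

fun newcol :: "(nat \<Rightarrow> 'v \<Rightarrow> bool) \<Rightarrow> 'v set \<Rightarrow> 'v \<Rightarrow> bool \<Rightarrow> nat \<Rightarrow> bool" where
  "newcol Si N i tst 0 = Si 0 i"
| "newcol Si N i tst (Suc 0) = (Si 1 i \<or> tst)"
| "newcol Si N i tst (Suc (Suc l)) =
     ((\<forall>b\<in>N - {i}. Si (Suc l) b) \<and> newcol Si N i tst (Suc l))"

definition T1guard :: "('v \<times> 'v) set \<Rightarrow> nat \<Rightarrow> ('v, 'a) astate \<Rightarrow> 'v \<Rightarrow> bool" where
  "T1guard E dG s i \<longleftrightarrow> \<not> allrow E s i dG \<and> \<not> Md s i"

definition T2guard :: "('v \<times> 'v) set \<Rightarrow> nat \<Rightarrow> ('v, 'a) astate \<Rightarrow> 'v \<Rightarrow> bool" where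
  "T2guard E dG s i \<longleftrightarrow> allrow E s i dG \<and> \<not> Md s i"

text \<open>Task T1 performed by the awake node i, followed by the reception of x_i and
S_i[:, d_i] by the (idle) neighbours.\<close>
definition doT1 ::
  "('v \<times> 'v) set \<Rightarrow> nat \<Rightarrow> ('v \<Rightarrow> real) \<Rightarrow> (('v, 'a) astate \<Rightarrow> 'v \<Rightarrow> 'a)
   \<Rightarrow> ('v, 'a::real_normed_vector) astate \<Rightarrow> 'v \<Rightarrow> ('v, 'a) astate" where
  "doT1 E dG L grad s i =
     (let gr = grad s i;
          tst = (norm gr \<le> eps s i);
          x' = xv s i - (1 / L i) *\<^sub>R gr;
          col = newcol (Sm s i) (Nb E i) i tst
      in s\<lparr> xv := (xv s)(i := x'),
            xc := (\<lambda>k j. if j = i \<and> k \<in> nbrs E i then x' else xc s k j),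
            Sm := (\<lambda>k l c. if c = i \<and> 1 \<le> l \<and> l \<le> dG \<and>
                              (k = i \<or> (k \<in> nbrs E i \<and> \<not> nnu s k i))
                           then col l else Sm s k l c) \<rparr>)"

definition step1 ::
  "('v \<times> 'v) set \<Rightarrow> nat \<Rightarrow> ('v \<Rightarrow> real) \<Rightarrow> (('v, 'a) astate \<Rightarrow> 'v \<Rightarrow> 'a)
   \<Rightarrow> ('v, 'a::real_normed_vector) astate \<Rightarrow> 'v \<Rightarrow> ('v, 'a) astate" where
  "step1 E dG L grad s i = (if T1guard E dG s i then doT1 E dG L grad s i else s)"

text \<open>Task T2 performed by node i, with new (non-decreasing) penalties rE', rI', rho' chosen
by the node, followed by the reception of nu_ij, rho_ij by the neighbours.\<close>
definition doT2 ::
  "('v \<times> 'v) set \<Rightarrow> nat \<Rightarrow> ('v \<Rightarrow> 'a \<Rightarrow> real) \<Rightarrow> ('v \<Rightarrow> 'a \<Rightarrow> real)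
   \<Rightarrow> real \<Rightarrow> real \<Rightarrow> ('v \<Rightarrow> real)
   \<Rightarrow> ('v, 'a::real_vector) astate \<Rightarrow> 'v \<Rightarrow> ('v, 'a) astate" where
  "doT2 E dG h g rE' rI' rho' s i =
     (let nu' = (\<lambda>j. if j \<in> nbrs E i then nu s i j + rho s i j *\<^sub>R (xv s i - xc s i j)
                     else nu s i j);
          rho'' = (\<lambda>j. if j \<in> nbrs E i then rho' j else rho s i j)
      in s\<lparr> nu := (nu s)(i := nu'),
            lam := (lam s)(i := lam s i + rE s i * h i (xv s i)),
            mu := (mu s)(i := max 0 (mu s i + rI s i * g i (xv s i))),
            rE := (rE s)(i := rE'),
            rI := (rI s)(i := rI'),
            rho := (rho s)(i := rho''),
            Md := (Md s)(i := True),
            nur := (\<lambda>k j. if j = i \<and> k \<in> nbrs E i then nu' k else nur s k j),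
            rhor := (\<lambda>k j. if j = i \<and> k \<in> nbrs E i then rho'' k else rhor s k j),
            nnu := (\<lambda>k j. if j = i \<and> k \<in> nbrs E i then True else nnu s k j),
            Sm := (\<lambda>k l c. if k \<in> nbrs E i \<and> l = dG \<and> c \<in> Nb E k then True
                           else Sm s k l c) \<rparr>)"

text \<open>IDLE-mode reset: a node with M_done = 1 that has received a new nu_ji from all its
neighbours sets M_done to 0, S_i to 0, and updates eps_i (to the arbitrary value epsn p).\<close>
definition resetc :: "('v \<times> 'v) set \<Rightarrow> ('v, 'a) astate \<Rightarrow> 'v \<Rightarrow> bool" where
  "resetc E s p \<longleftrightarrow> Md s p \<and> (\<forall>j\<in>nbrs E p. nnu s p j)"

definition doreset :: "('v \<times> 'v) set \<Rightarrow> ('v \<Rightarrow> real) \<Rightarrow> ('v, 'a) astate \<Rightarrow> ('v, 'a) astate" where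
  "doreset E epsn s =
     s\<lparr> Md := (\<lambda>p. if resetc E s p then False else Md s p),
        Sm := (\<lambda>p l c. if resetc E s p then False else Sm s p l c),
        nnu := (\<lambda>p j. if resetc E s p then False else nnu s p j),
        eps := (\<lambda>p. if resetc E s p then epsn p else eps s p) \<rparr>"

definition asymm_step ::
  "('v \<times> 'v) set \<Rightarrow> nat \<Rightarrow> ('v \<Rightarrow> real) \<Rightarrow> ('v \<Rightarrow> 'a \<Rightarrow> 'a) \<Rightarrow> ('v \<Rightarrow> 'a \<Rightarrow> 'a) \<Rightarrow> ('v \<Rightarrow> 'a \<Rightarrow> 'a)
   \<Rightarrow> ('v \<Rightarrow> 'a \<Rightarrow> real) \<Rightarrow> ('v \<Rightarrow> 'a::real_normed_vector \<Rightarrow> real)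
   \<Rightarrow> ('v, 'a) astate \<Rightarrow> 'v \<Rightarrow> ('v, 'a) astate \<Rightarrow> bool" where
  "asymm_step E dG L gf gh gg h g s i s' \<longleftrightarrow>
     (let s1 = step1 E dG L (gradL E gf gh gg h g) s i
      in \<exists>s2. (if T2guard E dG s1 i
               then (\<exists>rE' rI' rho'. rE' \<ge> rE s1 i \<and> rI' \<ge> rI s1 i \<and>
                       (\<forall>j\<in>nbrs E i. rho' j \<ge> rho s1 i j) \<and>
                       s2 = doT2 E dG h g rE' rI' rho' s1 i)
               else s2 = s1)
             \<and> (\<exists>epsn. s' = doreset E epsn s2))"

definition doesT1 :: "('v \<times> 'v) set \<Rightarrow> nat \<Rightarrow> ('v, 'a) astate \<Rightarrow> 'v \<Rightarrow> bool" where
  "doesT1 E dG s i = T1guard E dG s i"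

definition doesT2 ::
  "('v \<times> 'v) set \<Rightarrow> nat \<Rightarrow> ('v \<Rightarrow> real) \<Rightarrow> ('v \<Rightarrow> 'a \<Rightarrow> 'a) \<Rightarrow> ('v \<Rightarrow> 'a \<Rightarrow> 'a) \<Rightarrow> ('v \<Rightarrow> 'a \<Rightarrow> 'a)
   \<Rightarrow> ('v \<Rightarrow> 'a \<Rightarrow> real) \<Rightarrow> ('v \<Rightarrow> 'a::real_normed_vector \<Rightarrow> real)
   \<Rightarrow> ('v, 'a) astate \<Rightarrow> 'v \<Rightarrow> bool" where
  "doesT2 E dG L gf gh gg h g s i =
     T2guard E dG (step1 E dG L (gradL E gf gh gg h g) s i) i"

definition init_ok :: "('v \<times> 'v) set \<Rightarrow> ('v, 'a) astate \<Rightarrow> bool" where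
  "init_ok E s \<longleftrightarrow>
     (\<forall>i l c. \<not> Sm s i l c) \<and> (\<forall>i. \<not> Md s i) \<and> (\<forall>i j. \<not> nnu s i j) \<and>
     (\<forall>i. rE s i > 0 \<and> rI s i > 0) \<and> (\<forall>i j. rho s i j > 0) \<and>
     (\<forall>i j. j \<in> nbrs E i \<longrightarrow> xc s i j = xv s j \<and> nur s i j = nu s j i \<and> rhor s i j = rho s j i)"

end

theory Submission
  imports Defs
begin

text \<open>Call the epoch of a node the number of its multiplier updates whose reset has already
happened. Along a run the epochs of neighbours differ by at most one, and an entry of a matrix
S_k certifies, as in a breadth-first flooding, that every node within the corresponding
distance has performed T1 during the current epoch of k. A node can pass the T2 guard with
all of its neighbours in the same epoch only once row d_G of its matrix is full, i.e. only once
every node has performed T1 during that epoch. Counting updates, at t_{(k+1)N+1} all nodes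
have performed exactly k+1 updates and at t_{kN+1} exactly k; so the awake node at
t_{(k+1)N+1} is in epoch k+1 and the T1 steps it certifies lie after t_{kN+1}.\<close>

lemma relpow_gdist:
  assumes "graph_connected E" shows "(i, j) \<in> E ^^ gdist E i j"
proof -
  obtain k where "(i, j) \<in> E ^^ k"
    using assms by (auto simp: graph_connected_def rtrancl_power)
  then show ?thesis unfolding gdist_def by (rule LeastI)
qed

lemma gdist_le: "(i, j) \<in> E ^^ k \<Longrightarrow> gdist E i j \<le> k"
  unfolding gdist_def by (rule Least_le)

lemma gdist_self [simp]: "gdist E i i = 0"
  using gdist_le[where k=0 and E=E and i=i and j=i] by simp

lemma gdist_eq_0_iff: "graph_connected E \<Longrightarrow> gdist E i j = 0 \<longleftrightarrow> i = j"
  using relpow_gdist[of E i j] by auto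

lemma gdist_neighbour_closer:
  assumes conn: "graph_connected E" and "b \<noteq> i"
  obtains n where "(i, n) \<in> E" "gdist E n b < gdist E i b"
proof -
  obtain d where d: "gdist E i b = Suc d"
    using gdist_eq_0_iff[OF conn, of i b] \<open>b \<noteq> i\<close> not0_implies_Suc by auto
  then obtain n where "(i, n) \<in> E" "(n, b) \<in> E ^^ d"
    using relpow_gdist[OF conn, of i b] relpow_Suc_D2 by metis
  with d gdist_le[of n b d E] that show ?thesis by simp
qed

lemma gdist_le_diameter: "gdist E i j \<le> diameter (E :: ('v::finite \<times> 'v) set)"
proof -
  have "{gdist E i j | i j. True} = (\<lambda>(i, j). gdist E i j) ` UNIV" by auto
  then have "finite {gdist E i j | i j. True}" by simp
  then show ?thesis unfolding diameter_def by (rule Max_ge) auto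
qed

lemma diameter_pos:
  assumes "graph_connected E" "irrefl E" "(i, j) \<in> (E :: ('v::finite \<times> 'v) set)"
  shows "0 < diameter E"
  using assms gdist_eq_0_iff[of E i j] gdist_le_diameter[of E i j] by (auto simp: irrefl_def)

lemma nbrs_sym: "sym E \<Longrightarrow> i \<in> nbrs E k \<longleftrightarrow> k \<in> nbrs E i"
  by (auto simp: nbrs_def sym_def)

text \<open>Row l of the new column needs all neighbour entries of row l-1, and each of these
covers the distance l-2 around the neighbour.\<close>

lemma newcol_sound:
  assumes conn: "graph_connected E" and irr: "irrefl E"
    and nbr: "\<And>l n x. l < dG \<Longrightarrow> n \<in> nbrs E i \<Longrightarrow> Si l n \<Longrightarrow> gdist E n x < l \<Longrightarrow> P x"
    and "P i" and l: "1 \<le> l" "l \<le> dG" and col: "newcol Si (Nb E i) i tst l"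
    and b: "gdist E i b < l"
  shows "P b"
proof (cases "b = i")
  case True
  with \<open>P i\<close> show ?thesis by simp
next
  case False
  then obtain n where n: "(i, n) \<in> E" "gdist E n b < gdist E i b"
    using gdist_neighbour_closer[OF conn] by metis
  with b have "2 \<le> l" by linarith
  then obtain l' where l': "l = Suc (Suc l')" using add_2_eq_Suc le_Suc_ex by blast
  have "n \<in> Nb E i - {i}" "n \<in> nbrs E i"
    using n irr by (auto simp: Nb_def nbrs_def irrefl_def)
  with col have "Si (Suc l') n" unfolding l' by simp
  with nbr[of "Suc l'" n b] \<open>n \<in> nbrs E i\<close> b n l l' show ?thesis by simp
qed

text \<open>c x counts the multiplier updates performed by x, and did b e records that b has performed
T1 during its epoch e. The subtraction is truncated, but the first clause of the invariant
makes it exact. Row d_G of S_k may also have been filled by the arrival of a new multiplier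
from a neighbour; this is the second alternative in Sm_entry_sound.\<close>

definition epoch :: "('v, 'a) astate \<Rightarrow> ('v \<Rightarrow> nat) \<Rightarrow> 'v \<Rightarrow> nat" where
  "epoch s c x = c x - (if Md s x then 1 else 0)"

definition Sm_entry_sound ::
  "('v::finite \<times> 'v) set \<Rightarrow> ('v, 'a) astate \<Rightarrow> ('v \<Rightarrow> nat) \<Rightarrow> ('v \<Rightarrow> nat \<Rightarrow> bool)
   \<Rightarrow> 'v \<Rightarrow> nat \<Rightarrow> 'v \<Rightarrow> bool" where
  "Sm_entry_sound E s c did k l d \<longleftrightarrow> 1 \<le> l \<and>
     ((\<forall>b. gdist E d b < l \<longrightarrow> did b (epoch s c k)) \<or>
      (l = diameter E \<and> (\<exists>m\<in>nbrs E k. nnu s k m)))"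

definition asymm_inv ::
  "('v::finite \<times> 'v) set \<Rightarrow> ('v, 'a) astate \<Rightarrow> ('v \<Rightarrow> nat) \<Rightarrow> ('v \<Rightarrow> nat \<Rightarrow> bool) \<Rightarrow> bool" where
  "asymm_inv E s c did \<longleftrightarrow>
     (\<forall>x. Md s x \<longrightarrow> 1 \<le> c x) \<and>
     (\<forall>k j. j \<in> nbrs E k \<longrightarrow> epoch s c k \<le> c j \<and> c j \<le> epoch s c k + 1 \<and>
        (nnu s k j \<longleftrightarrow> c j = epoch s c k + 1)) \<and>
     (\<forall>k l d. d \<in> Nb E k \<longrightarrow> Sm s k l d \<longrightarrow> Sm_entry_sound E s c did k l d) \<and>
     (\<forall>k m. m \<in> nbrs E k \<longrightarrow> nnu s k m \<longrightarrow> (\<forall>x. epoch s c k \<le> epoch s c x)) \<and>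
     (\<forall>b e. did b e \<longrightarrow> e \<le> epoch s c b) \<and>
     (\<forall>x y. c x \<le> c y + 1)"

lemma epoch_le: "epoch s c x \<le> c x"
  by (simp add: epoch_def)

lemma epoch_cong: "Md s' = Md s \<Longrightarrow> epoch s' = epoch s"
  by (simp add: epoch_def fun_eq_iff)

lemma asymm_inv_nbr:
  "asymm_inv E s c did \<Longrightarrow> j \<in> nbrs E k \<Longrightarrow>
     epoch s c k \<le> c j \<and> c j \<le> epoch s c k + 1 \<and> (nnu s k j \<longleftrightarrow> c j = epoch s c k + 1)"
  by (simp add: asymm_inv_def)

lemma asymm_inv_Sm:
  "asymm_inv E s c did \<Longrightarrow> d \<in> Nb E k \<Longrightarrow> Sm s k l d \<Longrightarrow> Sm_entry_sound E s c did k l d"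
  by (simp add: asymm_inv_def)

lemma asymm_inv_did: "asymm_inv E s c did \<Longrightarrow> did b e \<Longrightarrow> e \<le> epoch s c b"
  by (simp add: asymm_inv_def)

lemma asymm_inv_counts_close: "asymm_inv E s c did \<Longrightarrow> c x \<le> c y + 1"
  by (simp add: asymm_inv_def)

lemma epoch_eq_if_no_new_nu:
  assumes "sym E" "asymm_inv E s c did" "\<not> Md s i" "k \<in> nbrs E i" "\<not> nnu s k i"
  shows "epoch s c k = epoch s c i"
  using asymm_inv_nbr[OF assms(2), of i k] assms nbrs_sym[of E i k] by (auto simp: epoch_def)

lemma full_row_did_all:
  assumes conn: "graph_connected E" and I: "asymm_inv E s c did"
    and full: "allrow E s i (diameter E)" and no_new: "\<not> (\<exists>m\<in>nbrs E i. nnu s i m)"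
  shows "did x (epoch s c i)"
proof (cases "x = i")
  case True
  have "Sm s i (diameter E) i" using full by (simp add: allrow_def Nb_def)
  then have "Sm_entry_sound E s c did i (diameter E) i"
    using asymm_inv_Sm[OF I] by (simp add: Nb_def)
  with True no_new show ?thesis by (simp add: Sm_entry_sound_def)
next
  case False
  then obtain n where n: "(i, n) \<in> E" "gdist E n x < gdist E i x"
    using gdist_neighbour_closer[OF conn] by metis
  then have "n \<in> Nb E i" by (simp add: Nb_def nbrs_def)
  moreover have "gdist E n x < diameter E" using n gdist_le_diameter[of E i x] by simp
  moreover have "Sm s i (diameter E) n" using full \<open>n \<in> Nb E i\<close> by (simp add: allrow_def)
  ultimately show ?thesis
    using asymm_inv_Sm[OF I \<open>n \<in> Nb E i\<close>] no_new by (auto simp: Sm_entry_sound_def)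
qed

lemma full_row_epoch_min:
  assumes "graph_connected E" and I: "asymm_inv E s c did" and "allrow E s i (diameter E)"
  shows "epoch s c i \<le> epoch s c x"
proof (cases "\<exists>m\<in>nbrs E i. nnu s i m")
  case True
  with I show ?thesis by (auto simp: asymm_inv_def)
next
  case False
  with full_row_did_all[OF assms] asymm_inv_did[OF I] show ?thesis by blast
qed

lemma doT1_simps:
  "Md (doT1 E dG L grad s i) = Md s"
  "nnu (doT1 E dG L grad s i) = nnu s"
  "Sm (doT1 E dG L grad s i) = (\<lambda>k l d.
     if d = i \<and> 1 \<le> l \<and> l \<le> dG \<and> (k = i \<or> (k \<in> nbrs E i \<and> \<not> nnu s k i))
     then newcol (Sm s i) (Nb E i) i (norm (grad s i) \<le> eps s i) l else Sm s k l d)"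
  by (simp_all add: doT1_def Let_def)

lemma newcol_did_all:
  assumes conn: "graph_connected E" and irr: "irrefl E" and I: "asymm_inv E s c did"
    and "1 \<le> l" "l \<le> diameter E" "newcol (Sm s i) (Nb E i) i tst l" "gdist E i b < l"
  shows "b = i \<or> did b (epoch s c i)"
proof (rule newcol_sound[OF conn irr _ _ assms(4-7)])
  fix l' n x assume "l' < diameter E" "n \<in> nbrs E i" "Sm s i l' n" "gdist E n x < l'"
  then show "x = i \<or> did x (epoch s c i)"
    using asymm_inv_Sm[OF I, of n i l'] by (auto simp: Nb_def Sm_entry_sound_def)
qed simp

lemma step1_preserves_inv:
  assumes sym: "sym E" and irr: "irrefl E" and conn: "graph_connected E"
    and I: "asymm_inv E s c did"
  shows "asymm_inv E (step1 E (diameter E) L grad s i) c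
           (\<lambda>b e. did b e \<or> (b = i \<and> T1guard E (diameter E) s i \<and> e = epoch s c i))"
proof (cases "T1guard E (diameter E) s i")
  case False
  with I show ?thesis by (simp add: step1_def)
next
  case True
  define did' where "did' = (\<lambda>b e. did b e \<or> (b = i \<and> e = epoch s c i))"
  define s1 where "s1 = doT1 E (diameter E) L grad s i"
  define col where "col = newcol (Sm s i) (Nb E i) i (norm (grad s i) \<le> eps s i)"
  have not_Md: "\<not> Md s i" using True by (simp add: T1guard_def)
  have col_sound: "did' b (epoch s c i)"
    if "1 \<le> l" "l \<le> diameter E" "col l" "gdist E i b < l" for l b
    using newcol_did_all[OF conn irr I that[unfolded col_def]] by (auto simp: did'_def)
  have Sm1: "Sm s1 k l d \<longleftrightarrow> (if d = i \<and> 1 \<le> l \<and> l \<le> diameter E \<and>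
      (k = i \<or> (k \<in> nbrs E i \<and> \<not> nnu s k i)) then col l else Sm s k l d)" for k l d
    by (simp only: s1_def doT1_simps col_def)
  have entries: "Sm_entry_sound E s c did' k l d" if "d \<in> Nb E k" "Sm s1 k l d" for k l d
  proof (cases "d = i \<and> 1 \<le> l \<and> l \<le> diameter E \<and> (k = i \<or> (k \<in> nbrs E i \<and> \<not> nnu s k i))")
    case new: True
    then have "epoch s c k = epoch s c i"
      using epoch_eq_if_no_new_nu[OF sym I not_Md] by auto
    moreover have "col l" using new that(2) Sm1 by simp
    ultimately show ?thesis
      using new col_sound[of l] unfolding Sm_entry_sound_def by simp
  next
    case False
    then have "Sm s k l d" using that(2) Sm1 by simp
    then have "Sm_entry_sound E s c did k l d" using asymm_inv_Sm[OF I that(1)] by simp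
    then show ?thesis unfolding Sm_entry_sound_def did'_def by blast
  qed
  have Md1: "Md s1 = Md s" and nnu1: "nnu s1 = nnu s" by (simp_all add: s1_def doT1_simps)
  have epoch1: "epoch s1 = epoch s" using Md1 by (rule epoch_cong)
  have sound1: "Sm_entry_sound E s1 = Sm_entry_sound E s"
    unfolding Sm_entry_sound_def epoch1 nnu1 ..
  have did'_le: "e \<le> epoch s c b" if "did' b e" for b e
    using that asymm_inv_did[OF I] by (auto simp: did'_def)
  have "asymm_inv E s1 c did'"
    using I entries did'_le unfolding asymm_inv_def Md1 nnu1 epoch1 sound1 by blast
  with True show ?thesis by (simp add: step1_def s1_def did'_def)
qed

lemma doT2_simps:
  "Md (doT2 E dG h g rE' rI' rho' s i) = (Md s)(i := True)"
  "nnu (doT2 E dG h g rE' rI' rho' s i) = (\<lambda>k j. j = i \<and> k \<in> nbrs E i \<or> nnu s k j)"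
  "Sm (doT2 E dG h g rE' rI' rho' s i) = (\<lambda>k l d. k \<in> nbrs E i \<and> l = dG \<and> d \<in> Nb E k \<or> Sm s k l d)"
  by (auto simp: doT2_def Let_def fun_eq_iff)

text \<open>The node performing T2 has a minimal epoch, so its count catches up with the counts
(and thus the epochs) of neighbours that are ahead of it.\<close>

lemma doT2_preserves_inv:
  assumes sym: "sym E" and irr: "irrefl E" and conn: "graph_connected E"
    and I: "asymm_inv E s c did" and guard: "T2guard E (diameter E) s i"
  shows "asymm_inv E (doT2 E (diameter E) h g rE' rI' rho' s i) (c(i := c i + 1)) did"
proof -
  define s2 where "s2 = doT2 E (diameter E) h g rE' rI' rho' s i"
  define c2 where "c2 = c(i := c i + 1)"
  have not_Md: "\<not> Md s i" using guard by (simp add: T2guard_def)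
  have epoch_i: "epoch s c i = c i" using not_Md by (simp add: epoch_def)
  have min: "c i \<le> epoch s c x" for x
    using full_row_epoch_min[OF conn I] guard epoch_i by (metis T2guard_def)
  have Md2: "Md s2 = (Md s)(i := True)"
    and nnu2: "nnu s2 = (\<lambda>k j. j = i \<and> k \<in> nbrs E i \<or> nnu s k j)"
    and Sm2: "Sm s2 = (\<lambda>k l d. k \<in> nbrs E i \<and> l = diameter E \<and> d \<in> Nb E k \<or> Sm s k l d)"
    by (simp_all add: s2_def doT2_simps)
  have epoch2: "epoch s2 c2 = epoch s c"
    using not_Md by (auto simp: epoch_def Md2 c2_def fun_eq_iff)
  have nbr_of_i: "c i = epoch s c k" if "k \<in> nbrs E i" for k
    using asymm_inv_nbr[OF I, of i k] that nbrs_sym[OF sym] min[of k] by auto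
  have nbr2: "epoch s2 c2 k \<le> c2 j \<and> c2 j \<le> epoch s2 c2 k + 1 \<and>
      (nnu s2 k j \<longleftrightarrow> c2 j = epoch s2 c2 k + 1)" if "j \<in> nbrs E k" for j k
    unfolding epoch2 nnu2 using asymm_inv_nbr[OF I that] nbr_of_i[of k] that nbrs_sym[OF sym, of k i]
    by (cases "j = i") (auto simp: c2_def)
  have new_nu_min2: "epoch s2 c2 k \<le> epoch s2 c2 x" if "m \<in> nbrs E k" "nnu s2 k m" for k m x
  proof (cases "m = i \<and> k \<in> nbrs E i")
    case True
    then show ?thesis using nbr_of_i[of k] min[of x] by (simp add: epoch2)
  next
    case False
    with that I show ?thesis by (auto simp: asymm_inv_def epoch2 nnu2)
  qed
  have close2: "c2 x \<le> c2 y + 1" for x y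
    using asymm_inv_counts_close[OF I, of x y] min[of y] epoch_le[of s c y]
    by (auto simp: c2_def)
  have "0 < diameter E" if "k \<in> nbrs E i" for k
    using diameter_pos[OF conn irr] that by (auto simp: nbrs_def)
  then have entries2: "Sm_entry_sound E s2 c2 did k l d" if "d \<in> Nb E k" "Sm s2 k l d" for k l d
    using that asymm_inv_Sm[OF I, of d k l] nbrs_sym[OF sym, of i k]
    by (fastforce simp: Sm_entry_sound_def epoch2 nnu2 Sm2)
  have Md_count2: "1 \<le> c2 x" if "Md s2 x" for x
    using that I by (auto simp: asymm_inv_def Md2 c2_def)
  have did2: "e \<le> epoch s2 c2 b" if "did b e" for b e
    using asymm_inv_did[OF I that] by (simp add: epoch2)
  have "asymm_inv E s2 c2 did"
    using nbr2 new_nu_min2 close2 entries2 Md_count2 did2 unfolding asymm_inv_def by blast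
  then show ?thesis by (simp add: s2_def c2_def)
qed

text \<open>A reset closes the epoch of the node: its count is unchanged, its epoch grows by one.\<close>

lemma doreset_preserves_inv:
  assumes I: "asymm_inv E s c did"
  shows "asymm_inv E (doreset E epsn s) c did"
proof -
  define s3 where "s3 = doreset E epsn s"
  have epoch3: "epoch s3 c p = (if resetc E s p then epoch s c p + 1 else epoch s c p)" for p
    using I by (auto simp: epoch_def s3_def doreset_def resetc_def asymm_inv_def)
  have mono: "epoch s c p \<le> epoch s3 c p" for p by (simp add: epoch3)
  have nnu3: "nnu s3 k j \<longleftrightarrow> \<not> resetc E s k \<and> nnu s k j" for k j
    by (simp add: s3_def doreset_def)
  have Sm3: "Sm s3 k l d \<longleftrightarrow> \<not> resetc E s k \<and> Sm s k l d" for k l d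
    by (simp add: s3_def doreset_def)
  have Md3: "Md s3 x \<Longrightarrow> Md s x" for x
    by (simp add: s3_def doreset_def split: if_splits)
  have nbr3: "epoch s3 c k \<le> c j \<and> c j \<le> epoch s3 c k + 1 \<and>
      (nnu s3 k j \<longleftrightarrow> c j = epoch s3 c k + 1)" if "j \<in> nbrs E k" for k j
    using asymm_inv_nbr[OF I that] that by (auto simp: epoch3 nnu3 resetc_def)
  have new_nu_min3: "epoch s3 c k \<le> epoch s3 c x" if "m \<in> nbrs E k" "nnu s3 k m" for k m x
  proof -
    have "epoch s c k \<le> epoch s c x" "\<not> resetc E s k"
      using that I by (auto simp: asymm_inv_def nnu3)
    with mono[of x] show ?thesis by (simp add: epoch3)
  qed
  have entries3: "Sm_entry_sound E s3 c did k l d" if "d \<in> Nb E k" "Sm s3 k l d" for k l d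
    using that asymm_inv_Sm[OF I, of d k l] by (auto simp: Sm_entry_sound_def Sm3 nnu3 epoch3)
  have "asymm_inv E s3 c did"
    using I nbr3 new_nu_min3 entries3 Md3 mono unfolding asymm_inv_def by (meson le_trans)
  then show ?thesis by (simp add: s3_def)
qed

lemma asymm_step_preserves_inv:
  assumes sym: "sym E" and irr: "irrefl E" and conn: "graph_connected E"
    and I: "asymm_inv E s c did" and step: "asymm_step E (diameter E) L gf gh gg h g s i s'"
  shows "asymm_inv E s'
           (c(i := c i + (if doesT2 E (diameter E) L gf gh gg h g s i then 1 else 0)))
           (\<lambda>b e. did b e \<or> (b = i \<and> T1guard E (diameter E) s i \<and> e = epoch s c i))"
    (is "asymm_inv E s' ?c ?did")
proof -
  define s1 where "s1 = step1 E (diameter E) L (gradL E gf gh gg h g) s i"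
  have I1: "asymm_inv E s1 c ?did"
    unfolding s1_def by (rule step1_preserves_inv[OF sym irr conn I])
  obtain s2 epsn where s': "s' = doreset E epsn s2"
    and s2: "if T2guard E (diameter E) s1 i
             then \<exists>rE' rI' rho'. rE' \<ge> rE s1 i \<and> rI' \<ge> rI s1 i \<and>
               (\<forall>j\<in>nbrs E i. rho' j \<ge> rho s1 i j) \<and>
               s2 = doT2 E (diameter E) h g rE' rI' rho' s1 i
             else s2 = s1"
    using step unfolding asymm_step_def Let_def s1_def by blast
  have "asymm_inv E s2 ?c ?did"
    using s2 doT2_preserves_inv[OF sym irr conn I1] I1
    by (auto simp: doesT2_def s1_def split: if_splits)
  then show ?thesis by (simp add: s' doreset_preserves_inv)
qed

lemma card_Collect_less_Suc:
  "card {t'. t' < Suc t \<and> P t'} = card {t'. t' < t \<and> P t'} + (if P t then 1 else 0)"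
proof -
  have "{t'. t' < Suc t \<and> P t'} = (if P t then insert t else id) {t'. t' < t \<and> P t'}"
    by (auto simp: less_Suc_eq)
  then show ?thesis by simp
qed

lemma const_if_close_and_sum_eq:
  fixes c :: "'v::finite \<Rightarrow> nat"
  assumes close: "\<And>x y. c x \<le> c y + 1" and sum: "(\<Sum>x\<in>UNIV. c x) = k * CARD('v)"
  shows "c x = k"
proof (rule ccontr)
  assume "c x \<noteq> k"
  then consider (above) "k < c x" | (below) "c x < k" by linarith
  then show False
  proof cases
    case above
    have "k \<le> c y" for y using close[of x y] above by linarith
    then have "(\<Sum>y\<in>(UNIV::'v set). k) < (\<Sum>y\<in>UNIV. c y)"
      using above by (intro sum_strict_mono_ex1) auto
    with sum show False by simp
  next
    case below
    have "c y \<le> k" for y using close[of y x] below by linarith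
    then have "(\<Sum>y\<in>UNIV. c y) < (\<Sum>y\<in>(UNIV::'v set). k)"
      using below by (intro sum_strict_mono_ex1) auto
    with sum show False by simp
  qed
qed

locale asymm_run =
  fixes E :: "('v::finite \<times> 'v) set" and L :: "'v \<Rightarrow> real"
    and gf gh gg :: "'v \<Rightarrow> 'a::real_normed_vector \<Rightarrow> 'a" and h g :: "'v \<Rightarrow> 'a \<Rightarrow> real"
    and st :: "nat \<Rightarrow> ('v, 'a) astate" and awake :: "nat \<Rightarrow> 'v"
  assumes graph: "undirected_graph E" and conn: "graph_connected E"
    and init: "init_ok E (st 0)"
    and run: "\<And>t. asymm_step E (diameter E) L gf gh gg h g (st t) (awake t) (st (Suc t))"
begin

abbreviation T2_at :: "nat \<Rightarrow> bool" where
  "T2_at t \<equiv> doesT2 E (diameter E) L gf gh gg h g (st t) (awake t)"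

definition T2_count :: "nat \<Rightarrow> 'v \<Rightarrow> nat" where
  "T2_count t x = card {t'. t' < t \<and> awake t' = x \<and> T2_at t'}"

definition T1_done :: "nat \<Rightarrow> 'v \<Rightarrow> nat \<Rightarrow> bool" where
  "T1_done t b e \<longleftrightarrow>
     (\<exists>t'<t. awake t' = b \<and> T1guard E (diameter E) (st t') b \<and> e = epoch (st t') (T2_count t') b)"

lemma E_sym: "sym E" and E_irrefl: "irrefl E"
  using graph by (simp_all add: undirected_graph_def)

lemma T2_count_Suc:
  "T2_count (Suc t) = (T2_count t)(awake t := T2_count t (awake t) + (if T2_at t then 1 else 0))"
proof
  fix x
  show "T2_count (Suc t) x
      = ((T2_count t)(awake t := T2_count t (awake t) + (if T2_at t then 1 else 0))) x"
    using card_Collect_less_Suc[of t "\<lambda>t'. awake t' = x \<and> T2_at t'"]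
    by (simp add: T2_count_def)
qed

lemma T1_done_Suc:
  "T1_done (Suc t) = (\<lambda>b e. T1_done t b e \<or>
     (b = awake t \<and> T1guard E (diameter E) (st t) (awake t) \<and> e = epoch (st t) (T2_count t) (awake t)))"
  unfolding T1_done_def by (auto simp: fun_eq_iff less_Suc_eq)

lemma asymm_inv_run: "asymm_inv E (st t) (T2_count t) (T1_done t)"
proof (induction t)
  case 0
  have "T2_count 0 = (\<lambda>_. 0)" "T1_done 0 = (\<lambda>_ _. False)"
    by (simp_all add: T2_count_def T1_done_def fun_eq_iff)
  with init show ?case
    by (simp add: asymm_inv_def init_ok_def epoch_def Sm_entry_sound_def)
next
  case (Suc t)
  show ?case
    unfolding T2_count_Suc T1_done_Suc
    by (rule asymm_step_preserves_inv[OF E_sym E_irrefl conn Suc.IH run])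
qed

lemma sum_T2_count: "(\<Sum>x\<in>UNIV. T2_count t x) = card {t'. t' < t \<and> T2_at t'}"
proof (induction t)
  case 0
  then show ?case by (simp add: T2_count_def)
next
  case (Suc t)
  have "(\<Sum>x\<in>UNIV. T2_count (Suc t) x)
      = (\<Sum>x\<in>UNIV. T2_count t x + (if x = awake t then (if T2_at t then 1 else 0) else 0))"
    by (rule sum.cong) (auto simp: T2_count_Suc)
  also have "\<dots> = (\<Sum>x\<in>UNIV. T2_count t x) + (if T2_at t then 1 else 0)"
    by (simp add: sum.distrib)
  finally show ?case
    using Suc.IH card_Collect_less_Suc[of t "\<lambda>t. T2_at t"] by simp
qed

lemma T2_count_eq:
  assumes "card {t'. t' < t \<and> T2_at t'} = k * CARD('v)"
  shows "T2_count t x = k"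
proof (rule const_if_close_and_sum_eq)
  show "T2_count t x \<le> T2_count t y + 1" for x y
    by (rule asymm_inv_counts_close[OF asymm_inv_run])
  show "(\<Sum>x\<in>UNIV. T2_count t x) = k * CARD('v)"
    using assms by (simp add: sum_T2_count)
qed

lemma T1_done_le_T2_count: "T1_done t b e \<Longrightarrow> e \<le> T2_count t b"
  by (rule le_trans[OF asymm_inv_did[OF asymm_inv_run] epoch_le])

lemma T1_done_all_at_T2:
  assumes T2: "T2_at t" and not_behind: "\<And>m. T2_count t m \<le> T2_count t (awake t)"
  shows "T1_done (Suc t) b (T2_count t (awake t))"
proof -
  define a where "a = awake t"
  define s1 where "s1 = step1 E (diameter E) L (gradL E gf gh gg h g) (st t) a"
  have I1: "asymm_inv E s1 (T2_count t) (T1_done (Suc t))"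
    unfolding s1_def T1_done_Suc a_def
    by (rule step1_preserves_inv[OF E_sym E_irrefl conn asymm_inv_run])
  have guard: "T2guard E (diameter E) s1 a"
    using T2 by (simp add: doesT2_def s1_def a_def)
  then have epoch_a: "epoch s1 (T2_count t) a = T2_count t a"
    by (simp add: epoch_def T2guard_def)
  have "\<not> nnu s1 a m" if "m \<in> nbrs E a" for m
    using asymm_inv_nbr[OF I1 that] epoch_a not_behind[of m] by (simp add: a_def)
  moreover have "allrow E s1 a (diameter E)" using guard by (simp add: T2guard_def)
  ultimately have "T1_done (Suc t) b (epoch s1 (T2_count t) a)"
    using full_row_did_all[OF conn I1] by blast
  with epoch_a show ?thesis by (simp add: a_def)
qed

lemma T1_between_T2_rounds:
  assumes ta: "card {t. t < ta \<and> T2_at t} = k * CARD('v)"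
    and tb: "T2_at tb" and tb_count: "card {t. t < tb \<and> T2_at t} = (k + 1) * CARD('v)"
  shows "\<exists>t. ta \<le> t \<and> t \<le> tb \<and> awake t = i \<and> doesT1 E (diameter E) (st t) i"
proof -
  have "T1_done (Suc tb) i (k + 1)"
    using T1_done_all_at_T2[OF tb, of i] T2_count_eq[OF tb_count] by simp
  then obtain t where t: "t < Suc tb" "awake t = i" "T1guard E (diameter E) (st t) i"
      "k + 1 = epoch (st t) (T2_count t) i"
    unfolding T1_done_def by blast
  have "ta \<le> t"
  proof (rule ccontr)
    assume "\<not> ta \<le> t"
    then have "t < ta" by simp
    with t(2-4) have "T1_done ta i (k + 1)" unfolding T1_done_def by blast
    then have "k + 1 \<le> T2_count ta i" by (rule T1_done_le_T2_count)
    with T2_count_eq[OF ta, of i] show False by simp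
  qed
  with t show ?thesis by (auto simp: doesT1_def)
qed

end

theorem lemma4:
  fixes E :: "('v::finite \<times> 'v) set"
    and f h g :: "'v \<Rightarrow> 'a::euclidean_space \<Rightarrow> real"
    and gf gh gg :: "'v \<Rightarrow> 'a \<Rightarrow> 'a"
    and L Tbar :: "'v \<Rightarrow> real"
    and st :: "nat \<Rightarrow> ('v, 'a) astate"
    and awake :: "nat \<Rightarrow> 'v"
    and \<tau> :: "nat \<Rightarrow> real"
  assumes graph: "undirected_graph E" and conn: "graph_connected E"
    and df: "\<And>i x. (f i has_derivative (\<lambda>v. gf i x \<bullet> v)) (at x)"
    and dh: "\<And>i x. (h i has_derivative (\<lambda>v. gh i x \<bullet> v)) (at x)"
    and dg: "\<And>i x. (g i has_derivative (\<lambda>v. gg i x \<bullet> v)) (at x)"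
    and Lpos: "\<And>i. L i > 0"
    and Tpos: "\<And>i. Tbar i > 0"
    and times: "strict_mono \<tau>"
    and first_wake: "\<And>i. \<exists>t. awake t = i"
    and waiting: "\<And>i t. awake t = i \<Longrightarrow>
                    \<exists>t'>t. awake t' = i \<and> \<tau> t' \<le> \<tau> t + Tbar i"
    and init: "init_ok E (st 0)"
    and run: "\<And>t. asymm_step E (diameter E) L gf gh gg h g (st t) (awake t) (st (Suc t))"
    and ta: "doesT2 E (diameter E) L gf gh gg h g (st ta) (awake ta)"
    and ta_idx: "card {t. t < ta \<and> doesT2 E (diameter E) L gf gh gg h g (st t) (awake t)}
                   = k * CARD('v)"
    and tb: "doesT2 E (diameter E) L gf gh gg h g (st tb) (awake tb)"
    and tb_idx: "card {t. t < tb \<and> doesT2 E (diameter E) L gf gh gg h g (st t) (awake t)}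
                   = (k + 1) * CARD('v)"
  shows "\<forall>i. \<exists>t. ta \<le> t \<and> t \<le> tb \<and> awake t = i \<and> doesT1 E (diameter E) (st t) i"
proof -
  interpret asymm_run E L gf gh gg h g st awake
    using graph conn init run by unfold_locales
  show ?thesis
    using T1_between_T2_rounds[OF ta_idx tb tb_idx] by blast
qed

end
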